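(* If $\vec \theta \in \Lambda$, then for every index $(\{i, j\},a)$ we have $\theta_{\{i,j\},a} \equiv 0 \pmod{\frac{2\pi}{\nu}}$, where $\nu$ is the order of $a$ in $\mathbb Z_g$. In particular, for all nonzero $a\in\mathbb Z_g$, $\theta_{\{i,j\},a} \equiv 0 \pmod{\frac{2\pi}{g}}$.
   Context: Let $g\ge 2$, $k\ge 2$ be integers, $\mathbb Z_g$ the integers mod $g$, and $d=\binom{k}{2}(g-1)$. Index the coordinates of $\mathbb R^d$ by pairs $(\{i,j\},a)$ with $1\le i<j\le k$ and $a\in\mathbb Z_g\setminus\{0\}$. Define $Z:(\mathbb Z_g)^k\to\mathbb R^d$ by $[Z(\vec x)]_{\{i,j\},a}=1-1/g$ if $x_i-x_j=a$ and $-1/g$ otherwise. Define $\Phi(\vec\theta)=\sum_{\vec x\in(\mathbb Z_g)^k} g^{-k}e^{i\vec\theta\cdot Z(\vec x)}$ for $\vec\theta\in\mathbb R^d$, and $\Lambda=\{\vec\theta\in\mathbb R^d: |\Phi(\vec\theta)|=1\}$. *)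

theory Defs
  imports "HOL-Analysis.Analysis"
begin

text \<open>Z_g is represented by the residues {0..<g}; a vector in (Z_g)^k is an
extensional function on {1..k} with values in {0..<g}.  Coordinates of R^d
are indexed by triples (i,j,a) with 1 <= i < j <= k and 1 <= a <= g-1;
theta is a function of these indices (values outside the index set are irrelevant).\<close>

definition idx :: "nat \<Rightarrow> nat \<Rightarrow> (nat \<times> nat \<times> nat) set" where
  "idx g k = {(i,j,a). 1 \<le> i \<and> i < j \<and> j \<le> k \<and> 1 \<le> a \<and> a < g}"

definition Zvec :: "nat \<Rightarrow> (nat \<Rightarrow> nat) \<Rightarrow> nat \<Rightarrow> nat \<Rightarrow> nat \<Rightarrow> real" where
  "Zvec g x i j a = (if (int (x i) - int (x j)) mod int g = int a
                      then 1 - 1 / real g else - 1 / real g)"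

definition dotZ :: "nat \<Rightarrow> nat \<Rightarrow> (nat \<Rightarrow> nat \<Rightarrow> nat \<Rightarrow> real) \<Rightarrow> (nat \<Rightarrow> nat) \<Rightarrow> real" where
  "dotZ g k \<theta> x = (\<Sum>(i,j,a)\<in>idx g k. \<theta> i j a * Zvec g x i j a)"

definition Phi :: "nat \<Rightarrow> nat \<Rightarrow> (nat \<Rightarrow> nat \<Rightarrow> nat \<Rightarrow> real) \<Rightarrow> complex" where
  "Phi g k \<theta> = (\<Sum>x\<in>PiE {1..k} (\<lambda>_. {0..<g}).
       complex_of_real (1 / real g ^ k) * exp (\<i> * complex_of_real (dotZ g k \<theta> x)))"

definition Lambda :: "nat \<Rightarrow> nat \<Rightarrow> (nat \<Rightarrow> nat \<Rightarrow> nat \<Rightarrow> real) set" where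
  "Lambda g k = {\<theta>. cmod (Phi g k \<theta>) = 1}"

definition ord_mod :: "nat \<Rightarrow> nat \<Rightarrow> nat" where
  "ord_mod g a = (LEAST n. 0 < n \<and> (n * a) mod g = 0)"

end

theory Submission
  imports Defs
begin

text \<open>If \<open>\<bar>\<Phi>(\<theta>)\<bar> = 1\<close>, the unimodular terms \<open>exp (i \<theta>\<cdot>Z(x))\<close> of the average \<open>\<Phi>(\<theta>)\<close>
must all be equal, so \<open>\<theta>\<cdot>Z(x) \<equiv> \<theta>\<cdot>Z(y) (mod 2\<pi>)\<close> for all \<open>x, y\<close>. Take \<open>x\<close> supported on the
coordinates \<open>i, j\<close> with values \<open>s, u\<close> and form the second difference in \<open>(s, u)\<close>: every pair
other than \<open>{i, j}\<close> sees only \<open>s\<close> or only \<open>u\<close> and cancels, and what remains says that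
\<open>\<psi>(t) = exp (i \<theta>\<^sub>i\<^sub>j\<^sub>t)\<close> (with \<open>\<theta>\<^sub>i\<^sub>j\<^sub>0 = 0\<close>) is a character of \<open>\<int>\<^sub>g\<close>. Hence
\<open>\<psi>(a)\<^sup>\<nu> = \<psi>(\<nu> a) = \<psi>(0) = 1\<close> whenever \<open>\<nu> a \<equiv> 0\<close>.\<close>

lemma cis_eq_1_iff: "cis t = 1 \<longleftrightarrow> (\<exists>m::int. t = 2 * pi * of_int m)"
  by (auto simp: cis_conv_exp exp_eq_1 mult.commute)

lemma power_of_additive_character:
  fixes \<psi> :: "int \<Rightarrow> 'a::monoid_mult"
  assumes "\<psi> 0 = 1" and "\<And>x y. \<psi> (x + y) = \<psi> x * \<psi> y"
  shows "\<psi> (int n * x) = \<psi> x ^ n"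
proof (induction n)
  case 0
  show ?case using assms(1) by simp
next
  case (Suc n)
  have "int (Suc n) * x = int n * x + x" by (simp add: algebra_simps)
  thus ?case by (simp add: assms(2) Suc power_commutes)
qed

lemma unimodular_terms_eq_if_norm_sum_eq_card:
  fixes f :: "'a \<Rightarrow> complex"
  assumes fin: "finite A" and unit: "\<And>x. x \<in> A \<Longrightarrow> norm (f x) = 1"
    and norm_sum: "norm (sum f A) = real (card A)" and "x \<in> A" "y \<in> A"
  shows "f x = f y"
proof -
  define N where "N = real (card A)"
  have "N > 0" using fin \<open>x \<in> A\<close> by (auto simp: N_def card_gt_0_iff)
  define w where "w = sum f A / of_real N"
  have "norm w = 1" using norm_sum \<open>N > 0\<close> by (simp add: w_def norm_divide N_def)
  hence w_cnj: "w * cnj w = 1" using complex_norm_square[of w] by simp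
  \<comment> \<open>Each \<open>Re (cnj w * f z)\<close> is at most 1 and they sum to \<open>N\<close>, so every one equals 1.\<close>
  have "sum f A = w * of_real N" using \<open>N > 0\<close> by (simp add: w_def)
  have "(\<Sum>z\<in>A. Re (cnj w * f z)) = Re (cnj w * sum f A)" by (simp add: sum_distrib_left)
  also have "\<dots> = Re ((w * cnj w) * of_real N)"
    using \<open>sum f A = w * of_real N\<close> by (simp add: mult.commute mult.left_commute)
  also have "\<dots> = N" using w_cnj by simp
  finally have "(\<Sum>z\<in>A. 1 - Re (cnj w * f z)) = 0" by (simp add: sum_subtractf N_def)
  moreover have "Re (cnj w * f z) \<le> 1" if "z \<in> A" for z
    using complex_Re_le_cmod[of "cnj w * f z"] unit[OF that] \<open>norm w = 1\<close> by (simp add: norm_mult)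
  ultimately have Re1: "Re (cnj w * f z) = 1" if "z \<in> A" for z
    using that sum_nonneg_eq_0_iff[OF fin, of "\<lambda>z. 1 - Re (cnj w * f z)"] by auto
  have "f z = w" if "z \<in> A" for z
  proof -
    have "norm (cnj w * f z) = 1" using unit[OF that] \<open>norm w = 1\<close> by (simp add: norm_mult)
    hence "cnj w * f z = 1"
      using cmod_power2[of "cnj w * f z"] Re1[OF that] by (simp add: complex_eq_iff)
    hence "w * (cnj w * f z) = w" by simp
    thus ?thesis using w_cnj by (simp add: mult.assoc[symmetric])
  qed
  thus ?thesis using \<open>x \<in> A\<close> \<open>y \<in> A\<close> by simp
qed

lemma cis_dotZ_eq_if_in_Lambda:
  assumes "g > 0" "\<theta> \<in> Lambda g k"
    and "x \<in> PiE {1..k} (\<lambda>_. {0..<g})" "y \<in> PiE {1..k} (\<lambda>_. {0..<g})"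
  shows "cis (dotZ g k \<theta> x) = cis (dotZ g k \<theta> y)"
proof -
  let ?P = "PiE {1..k} (\<lambda>_. {0..<g})"
  have "Phi g k \<theta> = complex_of_real (1 / real g ^ k) * (\<Sum>x\<in>?P. cis (dotZ g k \<theta> x))"
    by (simp add: Phi_def cis_conv_exp sum_distrib_left)
  hence "(\<Sum>x\<in>?P. cis (dotZ g k \<theta> x)) = Phi g k \<theta> * of_real (real g ^ k)"
    using assms(1) by simp
  hence "norm (\<Sum>x\<in>?P. cis (dotZ g k \<theta> x)) = real g ^ k"
    using assms(2) by (simp add: Lambda_def norm_mult norm_power)
  also have "\<dots> = real (card ?P)" by (simp add: card_PiE)
  finally show ?thesis
    by (rule unimodular_terms_eq_if_norm_sum_eq_card[rotated 2]) (use assms(3,4) in \<open>auto simp: finite_PiE\<close>)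
qed

definition pair_vec :: "nat \<Rightarrow> nat \<Rightarrow> nat \<Rightarrow> nat \<Rightarrow> nat \<Rightarrow> nat \<Rightarrow> nat" where
  "pair_vec k i j s u = (\<lambda>l. if l \<in> {1..k} then (if l = i then s else if l = j then u else 0) else undefined)"

lemma pair_vec_in_PiE: "s < g \<Longrightarrow> u < g \<Longrightarrow> pair_vec k i j s u \<in> PiE {1..k} (\<lambda>_. {0..<g})"
  by (auto simp: pair_vec_def PiE_def extensional_def)

definition theta_res :: "nat \<Rightarrow> (nat \<Rightarrow> nat \<Rightarrow> nat \<Rightarrow> real) \<Rightarrow> nat \<Rightarrow> nat \<Rightarrow> int \<Rightarrow> real" where
  "theta_res g \<theta> i j t = (if t mod int g = 0 then 0 else \<theta> i j (nat (t mod int g)))"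

lemma theta_res_mod [simp]: "theta_res g \<theta> i j (t mod int g) = theta_res g \<theta> i j t"
  by (simp add: theta_res_def)

lemma theta_res_0 [simp]: "theta_res g \<theta> i j 0 = 0"
  by (simp add: theta_res_def)

lemma theta_res_of_nat: "0 < a \<Longrightarrow> a < g \<Longrightarrow> theta_res g \<theta> i j (int a) = \<theta> i j a"
  by (simp add: theta_res_def)

lemma sum_residue_indicator:
  assumes "g > 0"
  shows "(\<Sum>b\<in>{1..<g}. if t mod int g = int b then \<theta> i j b else 0) = theta_res g \<theta> i j t"
proof (cases "t mod int g = 0")
  case True
  then show ?thesis by (simp add: theta_res_def)
next
  case False
  moreover have "0 \<le> t mod int g" "t mod int g < int g" using assms by simp_all
  ultimately have "nat (t mod int g) \<in> {1..<g}" by auto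
  moreover have "t mod int g = int b \<longleftrightarrow> b = nat (t mod int g)" for b
    using \<open>0 \<le> t mod int g\<close> by auto
  ultimately show ?thesis using False by (simp add: theta_res_def)
qed

lemma Zvec_second_difference:
  assumes "(p, q, b) \<in> idx g k" and "1 \<le> i" "i < j" "j \<le> k"
  shows "Zvec g (pair_vec k i j s u) p q b - Zvec g (pair_vec k i j s 0) p q b
           - Zvec g (pair_vec k i j 0 u) p q b + Zvec g (pair_vec k i j 0 0) p q b
       = (if p = i \<and> q = j then
            (if (int s - int u) mod int g = int b then 1 else 0)
            - (if int s mod int g = int b then 1 else 0)
            - (if (- int u) mod int g = int b then 1 else 0)
          else 0)"
  using assms by (auto simp: Zvec_def pair_vec_def idx_def)

lemma dotZ_second_difference:
  assumes "g > 0" and "1 \<le> i" "i < j" "j \<le> k"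
  shows "dotZ g k \<theta> (pair_vec k i j s u) - dotZ g k \<theta> (pair_vec k i j s 0)
           - dotZ g k \<theta> (pair_vec k i j 0 u) + dotZ g k \<theta> (pair_vec k i j 0 0)
       = theta_res g \<theta> i j (int s - int u) - theta_res g \<theta> i j (int s)
           - theta_res g \<theta> i j (- int u)"
proof -
  let ?ind = "\<lambda>t b. if t mod int g = int b then \<theta> i j b else 0"
  let ?D = "\<lambda>(p, q, b). \<theta> p q b * (Zvec g (pair_vec k i j s u) p q b - Zvec g (pair_vec k i j s 0) p q b
           - Zvec g (pair_vec k i j 0 u) p q b + Zvec g (pair_vec k i j 0 0) p q b)"
  have fin: "finite (idx g k)"
    by (rule finite_subset[of _ "{1..k} \<times> {1..k} \<times> {1..<g}"]) (auto simp: idx_def)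
  have "dotZ g k \<theta> (pair_vec k i j s u) - dotZ g k \<theta> (pair_vec k i j s 0)
          - dotZ g k \<theta> (pair_vec k i j 0 u) + dotZ g k \<theta> (pair_vec k i j 0 0)
      = sum ?D (idx g k)"
    by (simp add: dotZ_def sum.distrib sum_subtractf split_def algebra_simps)
  also have "\<dots> = sum ?D ((\<lambda>b. (i, j, b)) ` {1..<g})"
    using assms fin
    by (intro sum.mono_neutral_right) (auto simp: Zvec_second_difference idx_def)
  also have "\<dots> = (\<Sum>b\<in>{1..<g}. ?ind (int s - int u) b - ?ind (int s) b - ?ind (- int u) b)"
    using assms
    by (subst sum.reindex) (auto simp: inj_on_def idx_def Zvec_second_difference intro!: sum.cong)
  finally show ?thesis by (simp only: sum_subtractf sum_residue_indicator[OF \<open>g > 0\<close>])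
qed

lemma cis_theta_res_add:
  assumes "g > 0" "\<theta> \<in> Lambda g k" and "1 \<le> i" "i < j" "j \<le> k"
  shows "cis (theta_res g \<theta> i j (x + y)) = cis (theta_res g \<theta> i j x) * cis (theta_res g \<theta> i j y)"
proof -
  let ?h = "theta_res g \<theta> i j" and ?c = "\<lambda>s u. cis (dotZ g k \<theta> (pair_vec k i j s u))"
  define s where "s = nat (x mod int g)"
  define u where "u = nat ((- y) mod int g)"
  have "s < g" "u < g" using assms(1) by (auto simp: s_def u_def nat_less_iff)
  have "?c s u = ?c 0 0" "?c s 0 = ?c 0 0" "?c 0 u = ?c 0 0"
    using \<open>s < g\<close> \<open>u < g\<close> assms(1,2)
    by (auto intro!: cis_dotZ_eq_if_in_Lambda pair_vec_in_PiE)
  hence "?c s u / ?c s 0 / ?c 0 u * ?c 0 0 = 1" by simp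
  hence "cis (?h (int s - int u) - ?h (int s) - ?h (- int u)) = 1"
    by (simp add: cis_mult cis_divide dotZ_second_difference[OF assms(1,3-5)])
  hence "cis (?h (int s - int u)) = cis (?h (int s)) * cis (?h (- int u))"
    by (simp add: cis_divide[symmetric] divide_divide_eq_left field_simps cis_mult)
  moreover have "(int s - int u) mod int g = (x + y) mod int g"
    using assms(1) by (simp add: s_def u_def mod_diff_eq)
  moreover have "int s mod int g = x mod int g" "(- int u) mod int g = y mod int g"
    using assms(1) by (simp_all add: s_def u_def mod_minus_eq)
  ultimately show ?thesis by (metis theta_res_mod)
qed

lemma theta_multiple_of_2pi_div_annihilator:
  assumes "g > 0" "\<theta> \<in> Lambda g k" and "1 \<le> i" "i < j" "j \<le> k" and "0 < a" "a < g"
    and "n > 0" "(n * a) mod g = 0"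
  shows "\<exists>m::int. \<theta> i j a = of_int m * (2 * pi / real n)"
proof -
  let ?\<psi> = "\<lambda>t. cis (theta_res g \<theta> i j t)"
  have "?\<psi> (int a) ^ n = ?\<psi> (int n * int a)"
    by (rule power_of_additive_character[symmetric])
      (simp_all add: cis_theta_res_add[OF assms(1-5)])
  also have "int n * int a = int (n * a)" by simp
  also have "int (n * a) mod int g = 0" using assms(9) by (metis of_nat_0 zmod_int)
  hence "?\<psi> (int (n * a)) = 1" by (metis theta_res_mod theta_res_0 cis_zero)
  finally have "cis (\<theta> i j a) ^ n = 1" using assms(6,7) by (simp add: theta_res_of_nat)
  hence "cis (real n * \<theta> i j a) = 1" by (metis Complex.DeMoivre)
  then obtain m :: int where "real n * \<theta> i j a = 2 * pi * of_int m"
    by (auto simp: cis_eq_1_iff)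
  hence "\<theta> i j a = of_int m * (2 * pi / real n)" using assms(8) by (simp add: field_simps)
  thus ?thesis ..
qed

lemma ord_mod_LeastI:
  assumes "g > 0"
  shows "0 < ord_mod g a" "(ord_mod g a * a) mod g = 0"
  using LeastI[of "\<lambda>n. 0 < n \<and> (n * a) mod g = 0" g] assms by (auto simp: ord_mod_def)

theorem corollary2p4:
  fixes g k :: nat and \<theta> :: "nat \<Rightarrow> nat \<Rightarrow> nat \<Rightarrow> real"
  assumes "g \<ge> 2" and "k \<ge> 2" and "\<theta> \<in> Lambda g k"
  shows "\<forall>(i,j,a)\<in>idx g k.
           (\<exists>m::int. \<theta> i j a = of_int m * (2 * pi / real (ord_mod g a)))
         \<and> (\<exists>m::int. \<theta> i j a = of_int m * (2 * pi / real g))"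
proof -
  have "g > 0" using assms(1) by simp
  have "(\<exists>m::int. \<theta> i j a = of_int m * (2 * pi / real (ord_mod g a)))
      \<and> (\<exists>m::int. \<theta> i j a = of_int m * (2 * pi / real g))" if "(i, j, a) \<in> idx g k" for i j a
  proof -
    have ija: "1 \<le> i" "i < j" "j \<le> k" "0 < a" "a < g" using that by (auto simp: idx_def)
    note multiple = theta_multiple_of_2pi_div_annihilator[OF \<open>g > 0\<close> assms(3) ija]
    show ?thesis using multiple[OF ord_mod_LeastI[OF \<open>g > 0\<close>]] multiple[OF \<open>g > 0\<close>] by simp
  qed
  thus ?thesis by blast
qed

end
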